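(* Let $\mathbf{z}^* \in \mathbb{R}^d$ and $\mathcal{L}(\mathbf{z}) = \Vert \mathbf{z} - \mathbf{z}^* \Vert_2^2$. Let $\mathbf{z} : [0,1] \to \mathbb{R}^d$ be a smooth curve with nowhere-vanishing derivative $\partial_\alpha \mathbf{z}(\alpha) \neq 0$, such that $\mathbf{z}(1) = \mathbf{z}^*$ and $\mathcal{L}(\mathbf{z}(0)) > 0$. If the Gauss length of $\mathbf{z}$ is less than $\pi/2$, then $\alpha \mapsto \mathcal{L}(\mathbf{z}(\alpha))$ is monotonically decreasing (non-increasing) on $[0,1]$.
   Context: For a smooth curve $\mathbf{z}$ with nonvanishing derivative, let $\hat{\mathbf{v}}(\alpha) = \frac{\partial_\alpha \mathbf{z}(\alpha)}{\Vert \partial_\alpha \mathbf{z}(\alpha)\Vert_2}$ be the normalized tangent vector (the Gauss map, viewed as a map into the unit sphere, or into projective space with antipodal points identified). The Gauss length of $\mathbf{z}$ is $\int_0^1 \sqrt{\langle \partial_\alpha \hat{\mathbf{v}}(\alpha), \partial_\alpha \hat{\mathbf{v}}(\alpha)\rangle}\, d\alpha$; equivalently, writing $\mathbf{v} = \partial_\alpha \mathbf{z}$ and $\mathbf{a} = \partial_\alpha \mathbf{v}$, the integrand is $\sqrt{\frac{(\mathbf{v}\cdot\mathbf{v})(\mathbf{a}\cdot\mathbf{a}) - (\mathbf{a}\cdot\mathbf{v})^2}{(\mathbf{v}\cdot\mathbf{v})^2}}\,\Vert\mathbf{v}\Vert_2$, i.e. $\kappa(\alpha)\Vert \mathbf{v}(\alpha)\Vert_2$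 with $\kappa$ the curvature. *)

theory Defs
  imports "HOL-Analysis.Analysis"
begin

definition smooth_curve :: "(real \<Rightarrow> 'a::real_normed_vector) \<Rightarrow> bool" where
  "smooth_curve z \<longleftrightarrow>
     (\<exists>D :: nat \<Rightarrow> real \<Rightarrow> 'a. D 0 = z \<and>
        (\<forall>k. \<forall>t\<in>{0..1}. (D k has_vector_derivative D (Suc k) t) (at t within {0..1})))"

definition vel :: "(real \<Rightarrow> 'a::real_normed_vector) \<Rightarrow> real \<Rightarrow> 'a" where
  "vel z t = vector_derivative z (at t within {0..1})"

definition gauss_map :: "(real \<Rightarrow> 'a::real_normed_vector) \<Rightarrow> real \<Rightarrow> 'a" where
  "gauss_map z t = vel z t /\<^sub>R norm (vel z t)"

definition gauss_length :: "(real \<Rightarrow> 'a::real_normed_vector) \<Rightarrow> real" where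
  "gauss_length z =
     integral {0..1} (\<lambda>t. norm (vector_derivative (gauss_map z) (at t within {0..1})))"

end

theory Submission
  imports Defs
begin

(* The Gauss map u = v / |v| of the velocity v is a curve on the unit sphere whose length is the
   Gauss length. The angle arccos <u s, u t> between two of its points is at most the arc length
   between them, so a Gauss length below pi/2 makes any two velocities form an acute angle.
   Hence <z 1 - z s, v s>, the integral of <v r, v s> over [s, 1], is nonnegative: the velocity
   never points away from z 1 = zstar, and |z - zstar|^2, with derivative -2 <zstar - z, v>,
   does not increase. *)

definition sgn_deriv :: "'a::real_inner \<Rightarrow> 'a \<Rightarrow> 'a" where
  "sgn_deriv v a = (a - inner (sgn v) a *\<^sub>R sgn v) /\<^sub>R norm v"

lemma has_real_derivative_norm_comp:
  fixes v :: "real \<Rightarrow> 'a::real_inner"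
  assumes "(v has_vector_derivative a) (at t within S)" and "v t \<noteq> 0"
  shows "((\<lambda>x. norm (v x)) has_real_derivative inner (sgn (v t)) a) (at t within S)"
proof -
  have "((\<lambda>x. norm (v x)) has_derivative (\<lambda>h. inner (h *\<^sub>R a) (sgn (v t)))) (at t within S)"
    using has_derivative_compose[OF assms(1)[unfolded has_vector_derivative_def]
        has_derivative_norm[OF assms(2)]] .
  then show ?thesis
    unfolding has_field_derivative_def
    by (rule has_derivative_eq_rhs) (simp add: fun_eq_iff inner_commute)
qed

lemma has_vector_derivative_sgn:
  fixes v :: "real \<Rightarrow> 'a::real_inner"
  assumes v: "(v has_vector_derivative a) (at t within S)" and nz: "v t \<noteq> 0"
  shows "((\<lambda>x. sgn (v x)) has_vector_derivative sgn_deriv (v t) a) (at t within S)"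
proof -
  have "((\<lambda>x. inverse (norm (v x)) *\<^sub>R v x) has_vector_derivative
      inverse (norm (v t)) *\<^sub>R a + (- (inner (sgn (v t)) a * inverse (norm (v t) ^ 2))) *\<^sub>R v t)
      (at t within S)"
    using has_vector_derivative_scaleR[OF DERIV_inverse_fun[OF has_real_derivative_norm_comp[OF v nz]] v] nz
    by (simp add: power2_eq_square)
  moreover have "inverse (norm (v t)) *\<^sub>R a + (- (inner (sgn (v t)) a * inverse (norm (v t) ^ 2))) *\<^sub>R v t
      = sgn_deriv (v t) a"
    using nz by (simp add: sgn_deriv_def sgn_div_norm algebra_simps power2_eq_square divide_inverse)
  ultimately show ?thesis by (simp add: sgn_div_norm divide_inverse_commute)
qed

lemma inner_sgn_sgn_deriv: "inner (sgn v) (sgn_deriv v a) = 0"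
  by (cases "v = 0") (simp_all add: sgn_deriv_def inner_diff_right power2_norm_eq_inner[symmetric] norm_sgn)

lemma continuous_on_sgn_deriv [continuous_intros]:
  assumes "continuous_on S v" "continuous_on S a" "\<forall>t\<in>S. v t \<noteq> 0"
  shows "continuous_on S (\<lambda>t. sgn_deriv (v t) (a t))"
  unfolding sgn_deriv_def using assms by (intro continuous_intros) auto

lemma abs_inner_le_sqrt_one_minus_inner_sq:
  fixes x y w :: "'a::real_inner"
  assumes "norm x = 1" "norm y = 1" "inner y w = 0"
  shows "\<bar>inner x w\<bar> \<le> sqrt (1 - (inner x y)\<^sup>2) * norm w"
proof -
  define c where "c = inner x y"
  have "inner x w = inner (x - c *\<^sub>R y) w"
    using assms(3) by (simp add: inner_diff_left)
  moreover have "(norm (x - c *\<^sub>R y))\<^sup>2 = inner x x - 2 * c * inner x y + c * c * inner y y"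
    by (simp add: power2_norm_eq_inner inner_diff_left inner_diff_right inner_commute algebra_simps)
  then have "(norm (x - c *\<^sub>R y))\<^sup>2 = 1 - c\<^sup>2"
    using assms(1,2) by (simp add: power2_norm_eq_inner[symmetric] c_def power2_eq_square)
  then have "norm (x - c *\<^sub>R y) = sqrt (1 - c\<^sup>2)"
    by (metis norm_ge_zero real_sqrt_unique)
  ultimately show ?thesis
    using Cauchy_Schwarz_ineq2[of "x - c *\<^sub>R y" w] c_def by simp
qed

lemma arccos_inner_le_arc_length:
  fixes u u' :: "real \<Rightarrow> 'a::real_inner" and p :: 'a
  assumes "a \<le> b"
    and der: "\<And>t. t \<in> {a..b} \<Longrightarrow> (u has_vector_derivative u' t) (at t within {a..b})"
    and cont: "continuous_on {a..b} (\<lambda>t. norm (u' t))"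
    and unit: "\<And>t. t \<in> {a..b} \<Longrightarrow> norm (u t) = 1"
    and orth: "\<And>t. t \<in> {a..b} \<Longrightarrow> inner (u t) (u' t) = 0"
    and p: "norm p = 1"
    and off_poles: "\<And>t. a < t \<Longrightarrow> t < b \<Longrightarrow> \<bar>inner p (u t)\<bar> < 1"
  shows "arccos (inner p (u b)) \<le> arccos (inner p (u a)) + integral {a..b} (\<lambda>t. norm (u' t))"
proof -
  define c where "c t = inner p (u t)" for t
  define ell where "ell t = integral {a..t} (\<lambda>t. norm (u' t))" for t
  have c_bound: "\<bar>c t\<bar> \<le> 1" if "t \<in> {a..b}" for t
    using Cauchy_Schwarz_ineq2[of p "u t"] p unit[OF that] by (simp add: c_def)
  have c_cont: "continuous_on {a..b} c"
    unfolding c_def by (intro continuous_intros continuous_on_vector_derivative[OF der])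
  have ell_deriv: "(ell has_real_derivative norm (u' t)) (at t within {a..b})" if "t \<in> {a..b}" for t
    unfolding ell_def has_real_derivative_iff_has_vector_derivative
    by (rule integral_has_vector_derivative[OF cont that])
  have ell_cont: "continuous_on {a..b} ell"
    by (rule continuous_on_vector_derivative)
      (use ell_deriv in \<open>simp add: has_real_derivative_iff_has_vector_derivative\<close>)
  have "arccos (c b) - ell b \<le> arccos (c a) - ell a"
  proof (rule DERIV_nonpos_imp_decreasing_open[OF \<open>a \<le> b\<close>])
    show "continuous_on {a..b} (\<lambda>t. arccos (c t) - ell t)"
      using c_bound by (intro continuous_intros c_cont ell_cont) (auto simp: abs_le_iff)
  next
    fix t assume t: "a < t" "t < b"
    have at_t: "at t within {a..b} = at t" using t by (rule at_within_Icc_at)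
    have c_t: "-1 < c t" "c t < 1" using off_poles[OF t] by (auto simp: c_def)
    have "(c has_real_derivative inner p (u' t)) (at t)"
      unfolding c_def[abs_def] using bounded_linear.has_vector_derivative[OF bounded_linear_inner_right der[of t]] t at_t
      by (simp add: has_real_derivative_iff_has_vector_derivative)
    then have "((\<lambda>t. arccos (c t) - ell t) has_real_derivative
        inverse (- sqrt (1 - (c t)\<^sup>2)) * inner p (u' t) - norm (u' t)) (at t)"
      using ell_deriv[of t] t at_t
      by (intro DERIV_diff DERIV_chain2[where f = arccos and g = c, OF DERIV_arccos[OF c_t]]) auto
    moreover have "inverse (- sqrt (1 - (c t)\<^sup>2)) * inner p (u' t) \<le> norm (u' t)"
    proof -
      have "sqrt (1 - (c t)\<^sup>2) > 0" using c_t by (simp add: abs_square_less_1)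
      moreover have "\<bar>inner p (u' t)\<bar> \<le> sqrt (1 - (c t)\<^sup>2) * norm (u' t)"
        unfolding c_def using t by (intro abs_inner_le_sqrt_one_minus_inner_sq p unit orth) auto
      ultimately show ?thesis
        by (simp add: field_simps abs_le_iff mult.commute)
    qed
    ultimately show "\<exists>y. ((\<lambda>t. arccos (c t) - ell t) has_real_derivative y) (at t) \<and> y \<le> 0"
      by auto
  qed
  then show ?thesis by (simp add: c_def ell_def)
qed

lemma continuous_on_crossing_subinterval:
  fixes c :: "real \<Rightarrow> real"
  assumes cont: "continuous_on {s..t} c" and "s \<le> t"
    and cs: "c s = 1" and ct: "c t \<le> 0" and le_1: "\<And>\<tau>. \<tau> \<in> {s..t} \<Longrightarrow> c \<tau> \<le> 1"
  obtains t0 t1 where "s \<le> t0" "t0 \<le> t1" "t1 \<le> t" "c t0 = 1" "c t1 \<le> 0"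
    and "\<And>\<tau>. t0 < \<tau> \<Longrightarrow> \<tau> < t1 \<Longrightarrow> 0 < c \<tau> \<and> c \<tau> < 1"
proof -
  define S where "S = {s..t} \<inter> c -` {..0}"
  define t1 where "t1 = Inf S"
  have "closed S"
    unfolding S_def using cont by (intro continuous_closed_preimage) auto
  moreover have "t \<in> S" using ct \<open>s \<le> t\<close> by (simp add: S_def)
  ultimately have "t1 \<in> S"
    unfolding t1_def by (intro closed_contains_Inf) (auto simp: S_def)
  then have t1: "s \<le> t1" "t1 \<le> t" "c t1 \<le> 0" by (auto simp: S_def)
  define T where "T = {s..t1} \<inter> c -` {1}"
  define t0 where "t0 = Sup T"
  have "closed T"
    unfolding T_def using t1 by (intro continuous_closed_preimage continuous_on_subset[OF cont]) auto
  moreover have "s \<in> T" using cs t1 by (simp add: T_def)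
  ultimately have "t0 \<in> T"
    unfolding t0_def by (intro closed_contains_Sup) (auto simp: T_def)
  then have t0: "s \<le> t0" "t0 \<le> t1" "c t0 = 1" by (auto simp: T_def)
  show thesis
  proof (rule that[OF t0(1,2) t1(2) t0(3) t1(3)])
    fix \<tau> assume \<tau>: "t0 < \<tau>" "\<tau> < t1"
    show "0 < c \<tau> \<and> c \<tau> < 1"
      using cInf_lower[of \<tau> S] cSup_upper[of \<tau> T] le_1[of \<tau>] \<tau> t0 t1
      by (force simp: S_def t1_def T_def t0_def)
  qed
qed

lemma inner_pos_if_arc_length_less_pi_half:
  fixes u u' :: "real \<Rightarrow> 'a::real_inner"
  assumes der: "\<And>t. t \<in> {a..b} \<Longrightarrow> (u has_vector_derivative u' t) (at t within {a..b})"
    and cont: "continuous_on {a..b} (\<lambda>t. norm (u' t))"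
    and unit: "\<And>t. t \<in> {a..b} \<Longrightarrow> norm (u t) = 1"
    and orth: "\<And>t. t \<in> {a..b} \<Longrightarrow> inner (u t) (u' t) = 0"
    and len: "integral {a..b} (\<lambda>t. norm (u' t)) < pi / 2"
    and st: "a \<le> s" "s \<le> t" "t \<le> b"
  shows "inner (u s) (u t) > 0"
proof (rule ccontr)
  assume not_pos: "\<not> inner (u s) (u t) > 0"
  define c where "c \<tau> = inner (u s) (u \<tau>)" for \<tau>
  have c_bound: "\<bar>c \<tau>\<bar> \<le> 1" if "\<tau> \<in> {a..b}" for \<tau>
    using Cauchy_Schwarz_ineq2[of "u s" "u \<tau>"] unit[OF that] unit[of s] st by (simp add: c_def)
  have "continuous_on {s..t} c"
    unfolding c_def using st
    by (intro continuous_intros continuous_on_subset[OF continuous_on_vector_derivative[OF der]]) auto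
  \<comment> \<open>On (t0, t1) the angle to u s rises from 0 to at least pi/2 without reaching the poles,
    where arccos is not differentiable.\<close>
  then obtain t0 t1 where t01: "s \<le> t0" "t0 \<le> t1" "t1 \<le> t" "c t1 \<le> 0" "c t0 = 1"
    and between: "\<And>\<tau>. t0 < \<tau> \<Longrightarrow> \<tau> < t1 \<Longrightarrow> 0 < c \<tau> \<and> c \<tau> < 1"
    by (rule continuous_on_crossing_subinterval)
      (use unit[of s] st not_pos c_bound in \<open>auto simp: c_def power2_norm_eq_inner[symmetric] abs_le_iff\<close>)
  have sub: "{t0..t1} \<subseteq> {a..b}" using st t01 by auto
  have "arccos (c t1) \<le> arccos (c t0) + integral {t0..t1} (\<lambda>t. norm (u' t))"
    unfolding c_def
  proof (rule arccos_inner_le_arc_length[OF \<open>t0 \<le> t1\<close>])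
    show "(u has_vector_derivative u' \<tau>) (at \<tau> within {t0..t1})" if "\<tau> \<in> {t0..t1}" for \<tau>
      using der[of \<tau>] that sub by (auto intro: has_vector_derivative_within_subset)
    show "\<bar>inner (u s) (u \<tau>)\<bar> < 1" if "t0 < \<tau>" "\<tau> < t1" for \<tau>
      using between[OF that] by (simp add: c_def)
  qed (use sub unit orth st in \<open>auto intro: continuous_on_subset[OF cont]\<close>)
  also have "\<dots> \<le> integral {a..b} (\<lambda>t. norm (u' t))"
    using t01 sub by (auto intro!: integral_subset_le integrable_continuous_interval
        continuous_on_subset[OF cont])
  also have "\<dots> < arccos 0"
    using len by simp
  finally show False
    using arccos_le_arccos[of "c t1" 0] c_bound[of t1] t01 st by (auto simp: abs_le_iff)
qed

lemma decreasing_if_has_real_derivative_nonpos: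
  fixes f f' :: "real \<Rightarrow> real"
  assumes "a \<le> b"
    and der: "\<And>x. x \<in> {a..b} \<Longrightarrow> (f has_real_derivative f' x) (at x within {a..b})"
    and nonpos: "\<And>x. a < x \<Longrightarrow> x < b \<Longrightarrow> f' x \<le> 0"
  shows "f b \<le> f a"
proof (rule DERIV_nonpos_imp_decreasing_open[OF \<open>a \<le> b\<close>])
  show "continuous_on {a..b} f"
    using der by (intro continuous_on_vector_derivative)
      (simp add: has_real_derivative_iff_has_vector_derivative)
  show "\<exists>y. (f has_real_derivative y) (at x) \<and> y \<le> 0" if "a < x" "x < b" for x
    using der[of x] nonpos[OF that] that by (auto simp: at_within_Icc_at)
qed

lemma dist_to_endpoint_decreasing:
  fixes z v :: "real \<Rightarrow> 'a::real_inner"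
  assumes der: "\<And>t. t \<in> {a..b} \<Longrightarrow> (z has_vector_derivative v t) (at t within {a..b})"
    and acute: "\<And>s t. a \<le> s \<Longrightarrow> s \<le> t \<Longrightarrow> t \<le> b \<Longrightarrow> inner (v s) (v t) \<ge> 0"
    and st: "a \<le> s" "s \<le> t" "t \<le> b"
  shows "dist (z t) (z b) \<le> dist (z s) (z b)"
proof -
  have toward_end: "inner (z b - z \<tau>) (v \<tau>) \<ge> 0" if \<tau>: "a \<le> \<tau>" "\<tau> \<le> b" for \<tau>
  proof -
    have "inner (z b - z b) (v \<tau>) \<le> inner (z b - z \<tau>) (v \<tau>)"
    proof (rule decreasing_if_has_real_derivative_nonpos[OF \<open>\<tau> \<le> b\<close>,
          where f' = "\<lambda>\<beta>. - inner (v \<beta>) (v \<tau>)"])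
      fix \<beta> assume \<beta>: "\<beta> \<in> {\<tau>..b}"
      have "(z has_vector_derivative v \<beta>) (at \<beta> within {\<tau>..b})"
        by (rule has_vector_derivative_within_subset[OF der]) (use \<beta> \<tau> in auto)
      then have "((\<lambda>\<beta>. z b - z \<beta>) has_vector_derivative 0 - v \<beta>) (at \<beta> within {\<tau>..b})"
        by (intro has_vector_derivative_diff has_vector_derivative_const)
      from bounded_linear.has_vector_derivative[OF bounded_linear_inner_left this]
      show "((\<lambda>\<beta>. inner (z b - z \<beta>) (v \<tau>)) has_real_derivative - inner (v \<beta>) (v \<tau>))
          (at \<beta> within {\<tau>..b})"
        by (simp add: has_real_derivative_iff_has_vector_derivative)
    next
      fix \<beta> assume "\<tau> < \<beta>" "\<beta> < b"
      then show "- inner (v \<beta>) (v \<tau>) \<le> 0"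
        using acute[of \<tau> \<beta>] \<tau> by (simp add: inner_commute)
    qed
    then show ?thesis by simp
  qed
  have "inner (z t - z b) (z t - z b) \<le> inner (z s - z b) (z s - z b)"
  proof (rule decreasing_if_has_real_derivative_nonpos[OF \<open>s \<le> t\<close>,
        where f' = "\<lambda>\<tau>. 2 * inner (z \<tau> - z b) (v \<tau>)"])
    fix \<tau> assume \<tau>: "\<tau> \<in> {s..t}"
    have "(z has_vector_derivative v \<tau>) (at \<tau> within {s..t})"
      by (rule has_vector_derivative_within_subset[OF der]) (use \<tau> st in auto)
    then have "((\<lambda>\<tau>. z \<tau> - z b) has_vector_derivative v \<tau> - 0) (at \<tau> within {s..t})"
      by (intro has_vector_derivative_diff has_vector_derivative_const)
    from bounded_bilinear.has_vector_derivative[OF bounded_bilinear_inner this this]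
    show "((\<lambda>\<tau>. inner (z \<tau> - z b) (z \<tau> - z b)) has_real_derivative
        2 * inner (z \<tau> - z b) (v \<tau>)) (at \<tau> within {s..t})"
      by (simp add: has_real_derivative_iff_has_vector_derivative inner_commute)
  next
    fix \<tau> assume "s < \<tau>" "\<tau> < t"
    then show "2 * inner (z \<tau> - z b) (v \<tau>) \<le> 0"
      using toward_end[of \<tau>] st by (simp add: inner_diff_left inner_diff_right)
  qed
  then have "(dist (z t) (z b))\<^sup>2 \<le> (dist (z s) (z b))\<^sup>2"
    by (simp add: dist_norm power2_norm_eq_inner)
  then show ?thesis
    by (rule power2_le_imp_le) simp
qed
lemma smooth_curveE:
  assumes "smooth_curve z"
  obtains v a where "\<And>t. t \<in> {0..1} \<Longrightarrow> (z has_vector_derivative v t) (at t within {0..1})"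
    and "\<And>t. t \<in> {0..1} \<Longrightarrow> (v has_vector_derivative a t) (at t within {0..1})"
    and "continuous_on {0..1} a"
proof -
  obtain D where D0: "D 0 = z"
    and D: "\<And>k t. t \<in> {0..1} \<Longrightarrow> (D k has_vector_derivative D (Suc k) t) (at t within {0..1})"
    using assms unfolding smooth_curve_def by blast
  show thesis
  proof
    show "(z has_vector_derivative D 1 t) (at t within {0..1})" if "t \<in> {0..1}" for t
      using D[OF that, of 0] D0 by simp
    show "(D 1 has_vector_derivative D 2 t) (at t within {0..1})" if "t \<in> {0..1}" for t
      using D[OF that, of 1] by (simp add: numeral_2_eq_2)
    show "continuous_on {0..1} (D 2)"
      by (rule continuous_on_vector_derivative[OF D])
  qed
qed

lemma vel_eq:
  fixes z :: "real \<Rightarrow> 'a::euclidean_space"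
  assumes "(z has_vector_derivative v) (at t within {0..1})" "t \<in> {0..1}"
  shows "vel z t = v"
  unfolding vel_def by (rule vector_derivative_within_closed_interval) (use assms in auto)

lemma gauss_length_eq_integral_sgn_deriv:
  fixes z v a :: "real \<Rightarrow> 'a::euclidean_space"
  assumes z_der: "\<And>t. t \<in> {0..1} \<Longrightarrow> (z has_vector_derivative v t) (at t within {0..1})"
    and v_der: "\<And>t. t \<in> {0..1} \<Longrightarrow> (v has_vector_derivative a t) (at t within {0..1})"
    and nonzero: "\<And>t. t \<in> {0..1} \<Longrightarrow> v t \<noteq> 0"
  shows "gauss_length z = integral {0..1} (\<lambda>t. norm (sgn_deriv (v t) (a t)))"
  unfolding gauss_length_def
proof (rule integral_cong)
  fix t :: real assume t: "t \<in> {0..1}"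
  have "gauss_map z x = sgn (v x)" if "x \<in> {0..1}" for x
    using vel_eq[OF z_der[OF that] that] by (simp add: gauss_map_def sgn_div_norm)
  then have "(gauss_map z has_vector_derivative sgn_deriv (v t) (a t)) (at t within {0..1})"
    by (rule has_vector_derivative_transform[OF t _ has_vector_derivative_sgn[OF v_der[OF t] nonzero[OF t]]])
  then show "norm (vector_derivative (gauss_map z) (at t within {0..1})) = norm (sgn_deriv (v t) (a t))"
    using t by (simp add: vector_derivative_within_closed_interval)
qed

theorem theorem1:
  fixes z :: "real \<Rightarrow> real ^ 'd" and zstar :: "real ^ 'd" and L :: "real ^ 'd \<Rightarrow> real"
  assumes L_def: "\<And>x. L x = (norm (x - zstar))\<^sup>2"
    and smooth: "smooth_curve z"
    and nonvanishing: "\<And>t. t \<in> {0..1} \<Longrightarrow> vel z t \<noteq> 0"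
    and endpoint: "z 1 = zstar"
    and start: "L (z 0) > 0"
    and gauss: "gauss_length z < pi / 2"
  shows "\<forall>s t. 0 \<le> s \<and> s \<le> t \<and> t \<le> 1 \<longrightarrow> L (z t) \<le> L (z s)"
proof (intro allI impI)
  obtain v a where z_der: "\<And>t. t \<in> {0..1} \<Longrightarrow> (z has_vector_derivative v t) (at t within {0..1})"
    and v_der: "\<And>t. t \<in> {0..1} \<Longrightarrow> (v has_vector_derivative a t) (at t within {0..1})"
    and a_cont: "continuous_on {0..1} a"
    using smooth_curveE[OF smooth] by metis
  have v_nonzero: "v t \<noteq> 0" if "t \<in> {0..1}" for t
    using nonvanishing[OF that] vel_eq[OF z_der[OF that] that] by simp
  have acute: "inner (v s) (v t) \<ge> 0" if "0 \<le> s" "s \<le> t" "t \<le> 1" for s t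
  proof -
    have "inner (sgn (v s)) (sgn (v t)) > 0"
    proof (rule inner_pos_if_arc_length_less_pi_half[OF has_vector_derivative_sgn[OF v_der v_nonzero]])
      show "continuous_on {0..1} (\<lambda>t. norm (sgn_deriv (v t) (a t)))"
        using v_nonzero by (intro continuous_intros continuous_on_vector_derivative[OF v_der] a_cont) auto
      show "integral {0..1} (\<lambda>t. norm (sgn_deriv (v t) (a t))) < pi / 2"
        using gauss gauss_length_eq_integral_sgn_deriv[OF z_der v_der v_nonzero] by simp
    qed (use that v_nonzero in \<open>auto simp: inner_sgn_sgn_deriv norm_sgn\<close>)
    then show ?thesis
      by (simp add: sgn_div_norm zero_less_mult_iff)
  qed
  fix s t :: real assume "0 \<le> s \<and> s \<le> t \<and> t \<le> 1"
  then have "dist (z t) zstar \<le> dist (z s) zstar"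
    using dist_to_endpoint_decreasing[OF z_der acute] endpoint by auto
  then show "L (z t) \<le> L (z s)"
    by (simp add: L_def dist_norm power_mono)
qed

end
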